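(* For any $\alpha<1/2$ there exist constants $0<c\le C<\infty$ such that for all $n\ge1$, \[c\,n^{-1/2}\le \mathbb{P}\big(Z_i\ge i^\alpha\ \forall i=1,\ldots,n\big)\le C\,n^{-1/2}.\]
   Context: $X_1,X_2,\ldots$ are i.i.d. with $\mathbb{P}(X_i=1)=\mathbb{P}(X_i=-1)=1/2$ and $Z_i=\sum_{k=1}^i\prod_{j=1}^kX_j$. *)

theory Defs
  imports "HOL-Probability.Probability"
begin

definition Zsum :: "(nat \<Rightarrow> 'a \<Rightarrow> real) \<Rightarrow> nat \<Rightarrow> 'a \<Rightarrow> real" where
  "Zsum X i \<omega> = (\<Sum>k=1..i. \<Prod>j=1..k. X j \<omega>)"

end

theory Submission
  imports Defs
begin

text \<open>
  The partial products Y_k = X_1 \<cdots> X_k are again independent fair signs, so Z is a simple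
  random walk and the probability in question is the chance that this walk stays above the curve
  t powr \<alpha> up to time n; such survival quantities are computed exactly by first-step
  analysis.

  Upper bound: after its first step the walk must stay positive, and by the reflection principle
  a walk started at 1 stays positive for m steps with probability at most 2 / sqrt (m + 1).

  Lower bound: let the walk first climb straight to height L (probability 2 powr -L). From there,
  the walk killed at 0 is a martingale, so its killed mean is L; killing it additionally below the
  curve t powr \<beta> (\<beta> = max \<alpha> 0) loses at most the sum of superharmonic ``guards'', one
  for each dyadic time block [L 2^k, L 2^(k+1)), whose total is at most L/4 once L is large, because
  the guard of block k is of order L (L 2^k) powr (\<beta> - 1/2) and \<beta> < 1/2. A third-moment
  bound then turns a killed mean of order L at time m into a survival probability of order
  L / sqrt (L^2 + m).
\<close>

(* killed_exp A g m t x = E[g(S_m); (t + k, S_k) \<in> A for all k \<le> m] for the simple random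
   walk S started at S_0 = x at time t. *)
fun killed_exp :: "(nat \<Rightarrow> int \<Rightarrow> bool) \<Rightarrow> (int \<Rightarrow> real) \<Rightarrow> nat \<Rightarrow> nat \<Rightarrow> int \<Rightarrow> real" where
  "killed_exp A g 0 t x = (if A t x then g x else 0)"
| "killed_exp A g (Suc m) t x =
     (if A t x then (killed_exp A g m (Suc t) (x + 1) + killed_exp A g m (Suc t) (x - 1)) / 2 else 0)"

lemma killed_exp_nonneg:
  assumes "\<And>t x. A t x \<Longrightarrow> 0 \<le> g x"
  shows "0 \<le> killed_exp A g m t x"
  using assms by (induction m arbitrary: t x) auto

lemma killed_exp_mono_region:
  assumes "\<And>s y. t \<le> s \<Longrightarrow> A s y \<Longrightarrow> B s y" and "\<And>s y. B s y \<Longrightarrow> 0 \<le> g y"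
  shows "killed_exp A g m t x \<le> killed_exp B g m t x"
  using assms(1)
proof (induction m arbitrary: t x)
  case 0
  then show ?case using assms(2) by auto
next
  case (Suc m)
  have "killed_exp A g m (Suc t) y \<le> killed_exp B g m (Suc t) y" for y
    using Suc.prems by (intro Suc.IH) auto
  then show ?case
    using Suc.prems[of t x] killed_exp_nonneg[of B g, OF assms(2)] by (auto intro: add_mono)
qed

lemma killed_exp_mono_fun:
  assumes "\<And>t x. A t x \<Longrightarrow> g x \<le> h x"
  shows "killed_exp A g m t x \<le> killed_exp A h m t x"
  using assms by (induction m arbitrary: t x) (auto intro: add_mono)

lemma killed_exp_add: "killed_exp A (\<lambda>y. g y + h y) m t x = killed_exp A g m t x + killed_exp A h m t x"
  by (induction m arbitrary: t x) (auto simp: field_simps)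

lemma killed_exp_cmult: "killed_exp A (\<lambda>y. c * g y) m t x = c * killed_exp A g m t x"
  by (induction m arbitrary: t x) (auto simp: field_simps)

lemma killed_exp_time_invariant:
  assumes "\<And>s s' y. A s y = A s' y"
  shows "killed_exp A g m t x = killed_exp A g m t' x"
proof (induction m arbitrary: t t' x)
  case 0
  have "A t x = A t' x" using assms by blast
  then show ?case by simp
next
  case (Suc m)
  have "A t x = A t' x" using assms by blast
  moreover have "killed_exp A g m (Suc t) y = killed_exp A g m (Suc t') y" for y
    by (rule Suc.IH)
  ultimately show ?case by simp
qed

lemma killed_exp_one_Suc_le: "killed_exp A (\<lambda>_. 1) (Suc m) t x \<le> killed_exp A (\<lambda>_. 1) m t x"
proof (induction m arbitrary: t x)
  case 0
  then show ?case by auto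
next
  case (Suc m)
  have "killed_exp A (\<lambda>_. 1) (Suc m) (Suc t) y \<le> killed_exp A (\<lambda>_. 1) m (Suc t) y" for y
    by (rule Suc.IH)
  then show ?case
    unfolding killed_exp.simps(2)[of A _ "Suc m" t x] killed_exp.simps(2)[of A _ m t x]
    by (auto intro: add_mono divide_right_mono simp del: killed_exp.simps)
qed

lemma killed_exp_one_antimono:
  "m \<le> m' \<Longrightarrow> killed_exp A (\<lambda>_. 1) m' t x \<le> killed_exp A (\<lambda>_. 1) m t x"
  by (induction m' rule: dec_induct) (use killed_exp_one_Suc_le order_trans in blast)+

lemma killed_exp_straight_up:
  assumes "\<And>i. i < j \<Longrightarrow> A (t + i) (x + int i)" and "\<And>s y. A s y \<Longrightarrow> 0 \<le> g y"
  shows "killed_exp A g m (t + j) (x + int j) / 2 ^ j \<le> killed_exp A g (j + m) t x"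
  using assms(1)
proof (induction j arbitrary: t x)
  case 0
  then show ?case by simp
next
  case (Suc j)
  have "killed_exp A g m (t + Suc j) (x + int (Suc j)) / 2 ^ Suc j
      = killed_exp A g m (Suc t + j) (x + 1 + int j) / 2 ^ j / 2"
    by (simp add: algebra_simps)
  also have "\<dots> \<le> killed_exp A g (j + m) (Suc t) (x + 1) / 2"
  proof -
    have "killed_exp A g m (Suc t + j) (x + 1 + int j) / 2 ^ j \<le> killed_exp A g (j + m) (Suc t) (x + 1)"
      using Suc.prems[of "Suc i" for i] by (intro Suc.IH) (simp add: algebra_simps)
    then show ?thesis by (simp add: divide_right_mono)
  qed
  also have "\<dots> \<le> killed_exp A g (Suc j + m) t x"
    using Suc.prems[of 0] killed_exp_nonneg[of A g, OF assms(2)] by simp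
  finally show ?case .
qed

lemma central_binomial_Suc: "Suc m * (2 * Suc m choose Suc m) = 2 * (2 * m + 1) * (2 * m choose m)"
proof -
  have "2 * Suc m choose Suc m = 2 * (Suc (2 * m) choose m)"
    using central_binomial_odd[of "Suc (2 * m)"] by simp
  moreover have "Suc m * (Suc (2 * m) choose Suc m) = Suc (2 * m) * (2 * m choose m)"
    by (rule Suc_times_binomial)
  ultimately show ?thesis
    using central_binomial_odd[of "Suc (2 * m)"] by (simp add: algebra_simps)
qed

lemma central_binomial_sq_le: "(2 * m choose m)\<^sup>2 * (2 * m + 1) \<le> 16 ^ m"
proof (induction m)
  case 0
  then show ?case by simp
next
  case (Suc m)
  define a b where "a = 2 * m choose m" and "b = 2 * Suc m choose Suc m"
  have ab: "Suc m * b = 2 * (2 * m + 1) * a"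
    unfolding a_def b_def by (rule central_binomial_Suc)
  have "(Suc m)\<^sup>2 * (b\<^sup>2 * (2 * Suc m + 1)) = 4 * (2 * m + 3) * (2 * m + 1) * (a\<^sup>2 * (2 * m + 1))"
    using arg_cong[OF ab, of "\<lambda>z. z\<^sup>2 * (2 * m + 3)"] by (simp add: power2_eq_square algebra_simps)
  also have "\<dots> \<le> 4 * (2 * m + 3) * (2 * m + 1) * 16 ^ m"
    using Suc.IH unfolding a_def by simp
  also have "\<dots> \<le> (Suc m)\<^sup>2 * 16 ^ Suc m"
    by (simp add: power2_eq_square algebra_simps)
  finally show ?case
    unfolding b_def by (simp only: mult_le_cancel1) simp
qed

lemma middle_binomial_sq_le: "(t choose (t div 2))\<^sup>2 * (t + 1) \<le> 4 ^ t"
proof (cases "even t")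
  case True
  then obtain m where "t = 2 * m" by blast
  then show ?thesis using central_binomial_sq_le[of m] by (simp add: power_mult)
next
  case False
  then obtain m where t: "t = 2 * m + 1" by (blast elim: oddE)
  have "2 * Suc m choose Suc m = 2 * (t choose m)"
    using central_binomial_odd[of t] t by simp
  then have "4 * ((t choose m)\<^sup>2 * (t + 1)) \<le> (2 * Suc m choose Suc m)\<^sup>2 * (2 * Suc m + 1)"
    using t by (simp add: power2_eq_square algebra_simps)
  also have "\<dots> \<le> 4 * 4 ^ t"
    using central_binomial_sq_le[of "Suc m"] t by (simp add: power_mult)
  finally show ?thesis using t by simp
qed

definition walk_pmf :: "nat \<Rightarrow> int \<Rightarrow> real" where
  "walk_pmf t j =
     (if even (j + int t) \<and> - int t \<le> j then real (t choose nat ((j + int t) div 2)) / 2 ^ t else 0)"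

lemma walk_pmf_0: "walk_pmf 0 j = (if j = 0 then 1 else 0)"
  by (auto simp: walk_pmf_def)

lemma walk_pmf_Suc: "walk_pmf (Suc t) j = (walk_pmf t (j - 1) + walk_pmf t (j + 1)) / 2"
proof (cases "even (j + int (Suc t)) \<and> - int (Suc t) \<le> j")
  case False
  then show ?thesis by (auto simp: walk_pmf_def)
next
  case True
  then obtain k where j: "j = 2 * int k - int t - 1"
  proof -
    obtain v where v: "j + int (Suc t) = 2 * v" using True by (metis evenE)
    then show ?thesis using True by (intro that[of "nat v"]) auto
  qed
  show ?thesis
  proof (cases k)
    case 0
    then show ?thesis using j by (simp add: walk_pmf_def)
  next
    case (Suc k')
    have "nat ((j - 1 + int t) div 2) = k'" "nat ((j + 1 + int t) div 2) = k"
      "nat ((j + int (Suc t)) div 2) = k"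
      using j Suc by simp_all
    then show ?thesis using j Suc by (simp add: walk_pmf_def field_simps)
  qed
qed

lemma walk_pmf_le: "walk_pmf t j \<le> 1 / sqrt (real t + 1)"
proof -
  have "walk_pmf t j \<le> real (t choose (t div 2)) / 2 ^ t"
    unfolding walk_pmf_def using binomial_maximum[of t] by (auto intro: divide_right_mono)
  also have "\<dots> \<le> 1 / sqrt (real t + 1)"
  proof -
    have "real ((t choose (t div 2))\<^sup>2 * (t + 1)) \<le> real (4 ^ t)"
      using middle_binomial_sq_le[of t] by (simp only: of_nat_le_iff)
    then have "(real (t choose (t div 2)))\<^sup>2 * (real t + 1) \<le> 2 ^ t * 2 ^ t"
      by (simp add: algebra_simps flip: power_mult_distrib)
    then have "sqrt ((real (t choose (t div 2)))\<^sup>2 * (real t + 1)) \<le> 2 ^ t"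
      by (intro real_le_lsqrt) (simp_all add: power2_eq_square)
    then have "real (t choose (t div 2)) * sqrt (real t + 1) \<le> 2 ^ t"
      by (simp add: real_sqrt_mult)
    then show ?thesis by (simp add: field_simps)
  qed
  finally show ?thesis .
qed

lemma sum_int_shift: "(\<Sum>j\<in>{a..b}. f (j + c)) = (\<Sum>j\<in>{a + c..b + c}. f (j :: int))"
  by (rule sum.reindex_bij_witness[of _ "\<lambda>j. j - c" "\<lambda>j. j + c"]) auto

lemma sum_int_top: "a \<le> b + 1 \<Longrightarrow> (\<Sum>j\<in>{a..b + 1}. f j) = (\<Sum>j\<in>{a..b}. f j) + f (b + 1 :: int)"
  by (simp add: atLeastAtMostPlus1_int_conv add.commute)

lemma killed_exp_pos_survival:
  "0 \<le> x \<Longrightarrow> killed_exp (\<lambda>_ y. 0 < y) (\<lambda>_. 1) m t x = (\<Sum>j\<in>{-x..x - 1}. walk_pmf m j)"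
proof (induction m arbitrary: t x)
  case 0
  then show ?case by (simp add: walk_pmf_0)
next
  case (Suc m)
  show ?case
  proof (cases "0 < x")
    case False
    then show ?thesis using Suc.prems by simp
  next
    case True
    let ?S = "\<lambda>a b. \<Sum>j\<in>{a..b}. walk_pmf m j"
    have top: "?S a x = ?S a (x - 2) + walk_pmf m (x - 1) + walk_pmf m x" if "a \<le> x - 1" for a
      using that sum_int_top[of a "x - 2" "walk_pmf m"] sum_int_top[of a "x - 1" "walk_pmf m"] by simp
    have "(\<Sum>j\<in>{-x..x - 1}. walk_pmf m (j - 1)) = ?S (-x - 1) (x - 2)"
      using sum_int_shift[where f = "walk_pmf m" and c = "-1" and a = "-x" and b = "x - 1"] by simp
    moreover have "(\<Sum>j\<in>{-x..x - 1}. walk_pmf m (j + 1)) = ?S (-x + 1) x"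
      using sum_int_shift[where f = "walk_pmf m" and c = 1 and a = "-x" and b = "x - 1"] by simp
    ultimately have "(\<Sum>j\<in>{-x..x - 1}. walk_pmf (Suc m) j) = (?S (-x - 1) (x - 2) + ?S (-x + 1) x) / 2"
      by (simp add: walk_pmf_Suc sum.distrib flip: sum_divide_distrib)
    also have "\<dots> = (?S (-(x + 1)) (x + 1 - 1) + ?S (-(x - 1)) (x - 1 - 1)) / 2"
      using top[of "-x - 1"] top[of "-x + 1"] True by simp
    also have "\<dots> = killed_exp (\<lambda>_ y. 0 < y) (\<lambda>_. 1) (Suc m) t x"
      using Suc.IH[of "x + 1" "Suc t"] Suc.IH[of "x - 1" "Suc t"] True by simp
    finally show ?thesis ..
  qed
qed

lemma killed_exp_pos_survival_le:
  assumes "0 \<le> x"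
  shows "killed_exp (\<lambda>_ y. 0 < y) (\<lambda>_. 1) m t x \<le> 2 * x / sqrt (real m + 1)"
proof -
  have "killed_exp (\<lambda>_ y. 0 < y) (\<lambda>_. 1) m t x \<le> (\<Sum>j\<in>{-x..x - 1}. 1 / sqrt (real m + 1))"
    unfolding killed_exp_pos_survival[OF assms] by (intro sum_mono walk_pmf_le)
  then show ?thesis using assms by simp
qed

lemma killed_exp_pos_id: "0 \<le> x \<Longrightarrow> killed_exp (\<lambda>_ y. 0 < y) of_int m t x = of_int x"
proof (induction m arbitrary: t x)
  case (Suc m)
  then show ?case by (cases "x = 0") simp_all
qed simp

lemma killed_exp_pos_cube:
  "0 \<le> x \<Longrightarrow> killed_exp (\<lambda>_ y. 0 < y) (\<lambda>y. of_int y ^ 3) m t x \<le> of_int x ^ 3 + 3 * real m * of_int x"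
proof (induction m arbitrary: t x)
  case (Suc m)
  show ?case
  proof (cases "x = 0")
    case False
    then have "killed_exp (\<lambda>_ y. 0 < y) (\<lambda>y. of_int y ^ 3) (Suc m) t x
        \<le> ((of_int (x + 1) ^ 3 + 3 * real m * of_int (x + 1))
            + (of_int (x - 1) ^ 3 + 3 * real m * of_int (x - 1))) / 2"
      using Suc.IH[of "x + 1" "Suc t"] Suc.IH[of "x - 1" "Suc t"] Suc.prems
      by (simp add: add_mono divide_right_mono)
    also have "\<dots> = of_int x ^ 3 + 3 * real (Suc m) * of_int x"
      by (simp add: field_simps power3_eq_cube)
    finally show ?thesis .
  qed simp
qed simp

lemma killed_exp_diff_le_supersolution:
  assumes sub: "\<And>s y. B s y \<Longrightarrow> A s y"
    and exit: "\<And>s y. t \<le> s \<Longrightarrow> s \<le> t + m \<Longrightarrow> A s y \<Longrightarrow> \<not> B s y \<Longrightarrow>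
                 killed_exp A g (t + m - s) s y \<le> \<phi> s y"
    and super: "\<And>s y. t \<le> s \<Longrightarrow> s < t + m \<Longrightarrow> B s y \<Longrightarrow>
                 (\<phi> (Suc s) (y + 1) + \<phi> (Suc s) (y - 1)) / 2 \<le> \<phi> s y"
    and nonneg: "\<And>s y. 0 \<le> \<phi> s y"
  shows "killed_exp A g m t x - killed_exp B g m t x \<le> \<phi> t x"
  using exit super
proof (induction m arbitrary: t x)
  case 0
  then show ?case using sub nonneg[of t x] by (cases "B t x"; cases "A t x") auto
next
  case (Suc m)
  consider "B t x" | "A t x" "\<not> B t x" | "\<not> A t x" using sub by blast
  then show ?case
  proof cases
    case 1
    have IH: "killed_exp A g m (Suc t) y - killed_exp B g m (Suc t) y \<le> \<phi> (Suc t) y" for y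
      using Suc.prems by (intro Suc.IH) auto
    have "killed_exp A g (Suc m) t x - killed_exp B g (Suc m) t x
        = ((killed_exp A g m (Suc t) (x + 1) - killed_exp B g m (Suc t) (x + 1))
         + (killed_exp A g m (Suc t) (x - 1) - killed_exp B g m (Suc t) (x - 1))) / 2"
      using 1 sub by (simp add: field_simps)
    also have "\<dots> \<le> (\<phi> (Suc t) (x + 1) + \<phi> (Suc t) (x - 1)) / 2"
      using IH[of "x + 1"] IH[of "x - 1"] by simp
    also have "\<dots> \<le> \<phi> t x"
      using Suc.prems(2)[of t x] 1 by simp
    finally show ?thesis .
  next
    case 2
    then show ?thesis using Suc.prems(1)[of t x] by simp
  next
    case 3
    then show ?thesis using sub nonneg[of t x] by auto
  qed
qed

lemma killed_exp_id_le:
  assumes pos: "\<And>s y. B s y \<Longrightarrow> 0 < y" and "0 \<le> x" and "0 < R"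
  shows "killed_exp B of_int m t x
           \<le> R * killed_exp B (\<lambda>_. 1) m t x + (of_int x ^ 3 + 3 * real m * of_int x) / R\<^sup>2"
proof -
  have cubic_bound: "of_int y \<le> R * 1 + (1 / R\<^sup>2) * of_int y ^ 3" if "0 < y" for y :: int
  proof (cases "of_int y \<le> R")
    case False
    then have "R\<^sup>2 * of_int y \<le> of_int y ^ 2 * of_int y"
      using \<open>0 < R\<close> that by (intro mult_right_mono power_mono) auto
    then have "of_int y \<le> (1 / R\<^sup>2) * of_int y ^ 3"
      using \<open>0 < R\<close> by (simp add: field_simps power2_eq_square power3_eq_cube)
    then show ?thesis using \<open>0 < R\<close> by simp
  next
    case True
    moreover have "0 \<le> (1 / R\<^sup>2) * of_int y ^ 3" using that by simp
    ultimately show ?thesis by simp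
  qed
  have "killed_exp B of_int m t x \<le> killed_exp B (\<lambda>y. R * 1 + (1 / R\<^sup>2) * of_int y ^ 3) m t x"
    using pos cubic_bound by (intro killed_exp_mono_fun) auto
  also have "\<dots> = R * killed_exp B (\<lambda>_. 1) m t x + killed_exp B (\<lambda>y. of_int y ^ 3) m t x / R\<^sup>2"
    by (simp only: killed_exp_add killed_exp_cmult) simp
  also have "killed_exp B (\<lambda>y. of_int y ^ 3) m t x \<le> killed_exp (\<lambda>_ y. 0 < y) (\<lambda>y. of_int y ^ 3) m t x"
    using pos by (intro killed_exp_mono_region) auto
  also have "\<dots> \<le> of_int x ^ 3 + 3 * real m * of_int x"
    using \<open>0 \<le> x\<close> by (rule killed_exp_pos_cube)
  finally show ?thesis using \<open>0 < R\<close> by (simp add: divide_right_mono)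
qed

lemma killed_exp_survival_ge_of_mean_ge:
  assumes pos: "\<And>s y. B s y \<Longrightarrow> 0 < y" and "0 < x"
    and mean: "of_int x / 2 \<le> killed_exp B of_int m t x"
  shows "of_int x / (8 * sqrt (of_int x ^ 2 + 3 * real m)) \<le> killed_exp B (\<lambda>_. 1) m t x"
proof -
  define R where "R = 2 * sqrt (of_int x ^ 2 + 3 * real m)"
  have "0 < of_int x ^ 2 + 3 * real m" using \<open>0 < x\<close> by (simp add: add_pos_nonneg)
  then have "0 < R" and R2: "R\<^sup>2 = 4 * (of_int x ^ 2 + 3 * real m)"
    by (simp_all add: R_def power_mult_distrib)
  have cube: "(of_int x ^ 3 + 3 * real m * of_int x) / R\<^sup>2 = of_int x / 4"
    using \<open>0 < of_int x ^ 2 + 3 * real m\<close> unfolding R2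
    by (simp add: field_simps power2_eq_square power3_eq_cube)
  have "killed_exp B of_int m t x
          \<le> R * killed_exp B (\<lambda>_. 1) m t x + (of_int x ^ 3 + 3 * real m * of_int x) / R\<^sup>2"
    by (rule killed_exp_id_le) (use pos \<open>0 < x\<close> \<open>0 < R\<close> in auto)
  then have "of_int x / 4 \<le> R * killed_exp B (\<lambda>_. 1) m t x"
    using mean unfolding cube by linarith
  then have "of_int x / 4 / R \<le> killed_exp B (\<lambda>_. 1) m t x"
    using \<open>0 < R\<close> by (simp add: pos_divide_le_eq mult.commute)
  then show ?thesis by (simp add: R_def)
qed

definition above_curve :: "real \<Rightarrow> nat \<Rightarrow> int \<Rightarrow> bool" where
  "above_curve \<alpha> t x \<longleftrightarrow> real t powr \<alpha> \<le> of_int x"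

(* The guard of the dyadic time block [L 2^k, L 2^(k+1)), during which the curve t powr \<beta> stays
   below block_height: in the block it is x clipped to [0, block_height]; before the block it is
   block_height times the probability that the walk killed at 0 survives until the block starts. *)
definition block_height :: "nat \<Rightarrow> real \<Rightarrow> nat \<Rightarrow> real" where
  "block_height L \<beta> k = real (L * 2 ^ Suc k) powr \<beta>"

definition block_guard :: "nat \<Rightarrow> real \<Rightarrow> nat \<Rightarrow> nat \<Rightarrow> int \<Rightarrow> real" where
  "block_guard L \<beta> k t x =
     (if t < L * 2 ^ k
      then block_height L \<beta> k * killed_exp (\<lambda>_ y. 0 < y) (\<lambda>_. 1) (L * 2 ^ k - t) 0 x
      else if t < L * 2 ^ Suc k then max 0 (min (of_int x) (block_height L \<beta> k))
      else 0)"

lemma block_guard_nonneg: "0 \<le> block_guard L \<beta> k t x"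
  unfolding block_guard_def block_height_def
  using killed_exp_nonneg[of "\<lambda>_ y. 0 < y" "\<lambda>_. 1"] by auto

lemma block_guard_below_curve:
  assumes "0 \<le> \<beta>" "L * 2 ^ k \<le> t" "t < L * 2 ^ Suc k" "0 < x" "\<not> above_curve \<beta> t x"
  shows "block_guard L \<beta> k t x = of_int x"
proof -
  have "real t \<le> real (L * 2 ^ Suc k)"
    using assms(3) by (simp only: of_nat_le_iff)
  then have "real t powr \<beta> \<le> block_height L \<beta> k"
    unfolding block_height_def using assms(1) by (intro powr_mono2) auto
  then show ?thesis using assms unfolding block_guard_def above_curve_def by auto
qed

lemma block_guard_superharmonic:
  assumes "0 < x"
  shows "(block_guard L \<beta> k (Suc t) (x + 1) + block_guard L \<beta> k (Suc t) (x - 1)) / 2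
           \<le> block_guard L \<beta> k t x"
proof -
  let ?a = "block_height L \<beta> k" and ?Q = "killed_exp (\<lambda>_ y. 0 < y) (\<lambda>_. 1)"
  have "0 \<le> ?a" by (simp add: block_height_def)
  have Q_Suc: "?Q (Suc j) 0 x = (?Q j 0 (x + 1) + ?Q j 0 (x - 1)) / 2" for j
    using killed_exp_time_invariant[where A = "\<lambda>_ y. 0 < y" and g = "\<lambda>_. 1" and m = j and t = 1 and t' = 0]
      \<open>0 < x\<close> by simp
  consider "Suc t < L * 2 ^ k" | "Suc t = L * 2 ^ k" | "L * 2 ^ k \<le> t" "Suc t < L * 2 ^ Suc k"
    | "L * 2 ^ k \<le> t" "L * 2 ^ Suc k \<le> Suc t" by linarith
  then show ?thesis
  proof cases
    case 1
    then have "L * 2 ^ k - t = Suc (L * 2 ^ k - Suc t)" by simp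
    then have "?Q (L * 2 ^ k - t) 0 x
               = (?Q (L * 2 ^ k - Suc t) 0 (x + 1) + ?Q (L * 2 ^ k - Suc t) 0 (x - 1)) / 2"
      using Q_Suc by presburger
    then show ?thesis using 1 unfolding block_guard_def by (simp add: distrib_left add_divide_distrib)
  next
    case 2
    then have "0 < L" by (cases L) auto
    with 2 have t: "L * 2 ^ k - t = Suc 0" "Suc t < L * 2 ^ Suc k" by simp_all
    have "(block_guard L \<beta> k (Suc t) (x + 1) + block_guard L \<beta> k (Suc t) (x - 1)) / 2
        = (max 0 (min (of_int (x + 1)) ?a) + max 0 (min (of_int (x - 1)) ?a)) / 2"
      using 2 t unfolding block_guard_def by simp
    also have "\<dots> \<le> (?a + ?a * ?Q 0 0 (x - 1)) / 2"
      using \<open>0 \<le> ?a\<close> \<open>0 < x\<close> by (cases "x = 1") auto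
    also have "\<dots> = ?a * ?Q (Suc 0) 0 x"
      using Q_Suc[of 0] \<open>0 < x\<close> by (simp add: field_simps)
    also have "\<dots> = block_guard L \<beta> k t x"
      using 2 t unfolding block_guard_def by simp
    finally show ?thesis .
  next
    case 3
    then show ?thesis using \<open>0 \<le> ?a\<close> \<open>0 < x\<close> unfolding block_guard_def by auto
  next
    case 4
    then show ?thesis using block_guard_nonneg[of L \<beta> k t x] unfolding block_guard_def by auto
  qed
qed

lemma killed_exp_pos_survival_until_block:
  assumes "1 \<le> L" "1 \<le> k"
  shows "killed_exp (\<lambda>_ y. 0 < y) (\<lambda>_. 1) (L * 2 ^ k - L) 0 (int L)
           \<le> 4 * real L / sqrt (real (L * 2 ^ Suc k))"
proof -
  define y where "y = real (L * 2 ^ Suc k)"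
  have "0 < y" using assms by (simp add: y_def)
  obtain k' where k: "k = Suc k'" using assms(2) by (cases k) auto
  have "2 ^ k' \<le> 2 ^ k - (1::nat)" using k by simp
  then have "L * 2 ^ k' \<le> L * (2 ^ k - 1)" by (rule mult_le_mono2)
  then have "L * 2 ^ k' \<le> L * 2 ^ k - L" by (simp add: right_diff_distrib')
  then have "real (L * 2 ^ k') \<le> real (L * 2 ^ k - L)"
    by (simp only: of_nat_le_iff)
  moreover have "y / 4 = real (L * 2 ^ k')"
    unfolding y_def k by simp
  ultimately have "y / 4 \<le> real (L * 2 ^ k - L) + 1"
    by linarith
  then have "sqrt y / 2 \<le> sqrt (real (L * 2 ^ k - L) + 1)"
    by (metis real_sqrt_divide real_sqrt_four real_sqrt_le_mono)
  moreover have "0 < sqrt (real (L * 2 ^ k - L) + 1)" by (simp add: add_nonneg_pos del: of_nat_diff)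
  ultimately have "2 * real L / sqrt (real (L * 2 ^ k - L) + 1) \<le> 2 * real L / (sqrt y / 2)"
    using \<open>0 < y\<close> by (intro divide_left_mono mult_pos_pos) auto
  then show ?thesis
    using killed_exp_pos_survival_le[of "int L" "L * 2 ^ k - L" 0] by (simp add: y_def)
qed

lemma block_guard_start_le:
  assumes "1 \<le> L"
  shows "block_guard L \<beta> k L (int L) \<le> 4 * real L * real (L * 2 ^ Suc k) powr (\<beta> - 1/2)"
proof -
  define y where "y = real (L * 2 ^ Suc k)"
  have "0 < y" using assms by (simp add: y_def)
  have "y powr \<beta> = y powr (1/2) * y powr (\<beta> - 1/2)"
    by (subst powr_add[symmetric]) simp
  then have split_powr: "y powr \<beta> = sqrt y * y powr (\<beta> - 1/2)"
    using \<open>0 < y\<close> by (simp add: powr_half_sqrt)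
  show ?thesis
  proof (cases "k = 0")
    case True
    have "block_guard L \<beta> k L (int L) \<le> y powr \<beta>"
      using True assms unfolding block_guard_def block_height_def y_def by auto
    also have "\<dots> \<le> 4 * real L * y powr (\<beta> - 1/2)"
    proof -
      have "sqrt y \<le> 4 * real L"
        using True assms by (intro real_le_lsqrt) (auto simp: y_def power2_eq_square)
      then show ?thesis unfolding split_powr by (simp add: mult_right_mono)
    qed
    finally show ?thesis by (simp add: y_def)
  next
    case False
    then have "1 < (2::nat) ^ k" using one_less_power[of "2::nat" k] by simp
    then have "L < L * 2 ^ k" using assms by simp
    then have "block_guard L \<beta> k L (int L)
        = y powr \<beta> * killed_exp (\<lambda>_ y. 0 < y) (\<lambda>_. 1) (L * 2 ^ k - L) 0 (int L)"
      unfolding block_guard_def block_height_def y_def by simp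
    also have "\<dots> \<le> y powr \<beta> * (4 * real L / sqrt y)"
      using killed_exp_pos_survival_until_block[OF assms, of k] False
      by (intro mult_left_mono) (auto simp: y_def)
    also have "\<dots> = 4 * real L * y powr (\<beta> - 1/2)"
      using \<open>0 < y\<close> unfolding split_powr by (simp add: field_simps)
    finally show ?thesis by (simp add: y_def)
  qed
qed

lemma sum_block_guards_le:
  assumes "1 \<le> L" "\<beta> < 1/2"
    and small: "real L powr (\<beta> - 1/2) \<le> (1 - 2 powr (\<beta> - 1/2)) / 16"
  shows "(\<Sum>k<K. block_guard L \<beta> k L (int L)) \<le> real L / 4"
proof -
  define r :: real where "r = 2 powr (\<beta> - 1/2)"
  define p where "p = real L powr (\<beta> - 1/2)"
  have "0 < r" "r < 1" using assms(2) by (auto simp: r_def intro: powr_less_one)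
  have "0 \<le> p" by (simp add: p_def)
  have dyadic: "real (L * 2 ^ n) powr (\<beta> - 1/2) = p * r ^ n" for n
  proof -
    have "real (L * 2 ^ n) = real L * 2 powr real n"
      using powr_realpow[of 2 n] by simp
    then have "real (L * 2 ^ n) powr (\<beta> - 1/2) = p * (2 powr real n) powr (\<beta> - 1/2)"
      unfolding p_def by (simp only: powr_mult of_nat_0_le_iff powr_nonneg_iff)
    also have "(2 powr real n) powr (\<beta> - 1/2) = r powr real n"
      by (simp add: r_def powr_powr mult.commute)
    also have "\<dots> = r ^ n"
      using \<open>0 < r\<close> by (rule powr_realpow)
    finally show ?thesis .
  qed
  have "block_guard L \<beta> k L (int L) \<le> 4 * real L * p * r ^ Suc k" for k
    using block_guard_start_le[OF assms(1), of \<beta> k] unfolding dyadic by (simp add: mult.assoc)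
  then have "(\<Sum>k<K. block_guard L \<beta> k L (int L)) \<le> (\<Sum>k<K. 4 * real L * p * r ^ Suc k)"
    by (intro sum_mono)
  also have "\<dots> = 4 * real L * p * r * (\<Sum>k<K. r ^ k)"
    by (simp add: sum_distrib_left mult.assoc)
  also have "\<dots> \<le> 4 * real L * p * 1 * (1 / (1 - r))"
  proof (intro mult_mono)
    show "(\<Sum>k<K. r ^ k) \<le> 1 / (1 - r)"
      using \<open>0 < r\<close> \<open>r < 1\<close> by (simp add: sum_gp_strict divide_right_mono)
  qed (use \<open>0 < r\<close> \<open>r < 1\<close> \<open>0 \<le> p\<close> in \<open>auto intro: sum_nonneg\<close>)
  also have "\<dots> \<le> 4 * real L * ((1 - r) / 16) * (1 / (1 - r))"
  proof -
    have "4 * real L * p \<le> 4 * real L * ((1 - r) / 16)"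
      using small unfolding p_def r_def by (intro mult_left_mono) auto
    then show ?thesis using \<open>r < 1\<close> by (intro mult_right_mono) auto
  qed
  also have "\<dots> = real L / 4"
    using \<open>r < 1\<close> by (simp add: field_simps)
  finally show ?thesis .
qed

lemma exists_dyadic_block:
  "(L :: nat) \<le> t \<Longrightarrow> t < L * 2 ^ K \<Longrightarrow> \<exists>k<K. L * 2 ^ k \<le> t \<and> t < L * 2 ^ Suc k"
proof (induction K)
  case (Suc K)
  then show ?case by (cases "t < L * 2 ^ K") (auto intro: less_SucI)
qed simp

lemma killed_exp_above_curve_mean_ge:
  assumes "1 \<le> L" "0 \<le> \<beta>" "\<beta> < 1/2"
    and small: "real L powr (\<beta> - 1/2) \<le> (1 - 2 powr (\<beta> - 1/2)) / 16"
  shows "real L / 2 \<le> killed_exp (\<lambda>s y. 0 < y \<and> above_curve \<beta> s y) of_int m L (int L)"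
proof -
  let ?\<phi> = "\<lambda>s y. \<Sum>k<L + m. block_guard L \<beta> k s y"
  have "killed_exp (\<lambda>_ y. 0 < y) of_int m L (int L)
          - killed_exp (\<lambda>s y. 0 < y \<and> above_curve \<beta> s y) of_int m L (int L) \<le> ?\<phi> L (int L)"
  proof (rule killed_exp_diff_le_supersolution[where \<phi> = ?\<phi>])
    fix s y
    assume s: "L \<le> s" "s \<le> L + m" and y: "0 < y" "\<not> (0 < y \<and> above_curve \<beta> s y)"
    have "L + m < 2 ^ (L + m)" by (rule less_exp)
    also have "\<dots> \<le> L * 2 ^ (L + m)" using assms(1) by simp
    finally have "L + m < L * 2 ^ (L + m)" .
    then obtain k where k: "k < L + m" "L * 2 ^ k \<le> s" "s < L * 2 ^ Suc k"
      using exists_dyadic_block[of L s "L + m"] s by auto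
    have "killed_exp (\<lambda>_ y. 0 < y) of_int (L + m - s) s y = block_guard L \<beta> k s y"
      using block_guard_below_curve[OF assms(2) k(2,3)] y killed_exp_pos_id by simp
    also have "\<dots> \<le> ?\<phi> s y"
      using k(1) by (intro member_le_sum block_guard_nonneg) auto
    finally show "killed_exp (\<lambda>_ y. 0 < y) of_int (L + m - s) s y \<le> ?\<phi> s y" .
  next
    fix s y
    assume "0 < y \<and> above_curve \<beta> s y"
    then have "(\<Sum>k<L + m. (block_guard L \<beta> k (Suc s) (y + 1) + block_guard L \<beta> k (Suc s) (y - 1)) / 2)
                 \<le> ?\<phi> s y"
      by (intro sum_mono block_guard_superharmonic) simp
    then show "(?\<phi> (Suc s) (y + 1) + ?\<phi> (Suc s) (y - 1)) / 2 \<le> ?\<phi> s y"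
      by (simp add: sum.distrib flip: sum_divide_distrib)
  qed (auto intro: sum_nonneg block_guard_nonneg)
  also have "\<dots> \<le> real L / 4"
    using assms(1,3) small by (rule sum_block_guards_le)
  finally show ?thesis
    using killed_exp_pos_id[of "int L" m L] by simp
qed

lemma killed_exp_above_curve_survival_ge:
  assumes "1 \<le> L" "0 \<le> \<beta>" "\<beta> < 1/2"
    and small: "real L powr (\<beta> - 1/2) \<le> (1 - 2 powr (\<beta> - 1/2)) / 16"
  shows "real L / (8 * sqrt (real L ^ 2 + 3 * real m))
           \<le> killed_exp (\<lambda>s y. 0 < y \<and> above_curve \<beta> s y) (\<lambda>_. 1) m L (int L)"
  using killed_exp_survival_ge_of_mean_ge[where B = "\<lambda>s y. 0 < y \<and> above_curve \<beta> s y" and x = "int L"]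
    killed_exp_above_curve_mean_ge[OF assms] assms(1)
  by simp

lemma killed_exp_above_curve_upper:
  assumes "1 \<le> n"
  shows "killed_exp (above_curve \<alpha>) (\<lambda>_. 1) n 0 0 \<le> 1 / sqrt (real n)"
proof -
  obtain n' where n: "n = Suc n'" using assms by (cases n) auto
  have "killed_exp (above_curve \<alpha>) (\<lambda>_. 1) n' 1 1 \<le> killed_exp (\<lambda>_ y. 0 < y) (\<lambda>_. 1) n' 1 1"
  proof (rule killed_exp_mono_region)
    fix s y
    assume "1 \<le> s" "above_curve \<alpha> s y"
    then have "0 < real s powr \<alpha>" "real s powr \<alpha> \<le> of_int y"
      by (auto simp: above_curve_def)
    then show "0 < y" by linarith
  qed simp
  also have "\<dots> \<le> 2 / sqrt (real n)"
    using killed_exp_pos_survival_le[of 1 n' 1] n by (simp add: add.commute)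
  finally have "killed_exp (above_curve \<alpha>) (\<lambda>_. 1) n' 1 1 \<le> 2 / sqrt (real n)" .
  moreover have "killed_exp (above_curve \<alpha>) (\<lambda>_. 1) n' 1 (-1) = 0"
    by (cases n') (simp_all add: above_curve_def)
  ultimately show ?thesis
    using n by (simp add: above_curve_def)
qed

lemma exists_nat_powr_le:
  assumes "e < 0" "0 < \<epsilon>"
  shows "\<exists>L::nat. 1 \<le> L \<and> real L powr e \<le> \<epsilon>"
proof -
  have "((\<lambda>L. real L powr e) \<longlongrightarrow> 0) sequentially"
    using assms(1) by (intro tendsto_neg_powr filterlim_real_sequentially) auto
  then have "eventually (\<lambda>L. real L powr e < \<epsilon>) sequentially"
    using assms(2) by (rule order_tendstoD)
  then obtain N where "\<And>L. N \<le> L \<Longrightarrow> real L powr e < \<epsilon>"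
    unfolding eventually_sequentially by blast
  then show ?thesis
    by (intro exI[of _ "max N 1"]) (simp add: less_imp_le)
qed

lemma above_curve_diagonal: "\<alpha> \<le> 1 \<Longrightarrow> above_curve \<alpha> i (int i)"
  unfolding above_curve_def
  using powr_mono[of \<alpha> 1 "real i"] by (cases "i = 0") auto

lemma killed_exp_above_curve_lower:
  assumes "\<alpha> < 1/2"
  obtains c where "0 < c"
    and "\<And>n. 1 \<le> n \<Longrightarrow> c / sqrt (real n) \<le> killed_exp (above_curve \<alpha>) (\<lambda>_. 1) n 0 0"
proof -
  define \<beta> where "\<beta> = max \<alpha> 0"
  have \<beta>: "0 \<le> \<beta>" "\<beta> < 1/2" "\<alpha> \<le> \<beta>"
    using assms by (auto simp: \<beta>_def)
  have "\<beta> - 1/2 < 0" and "0 < (1 - 2 powr (\<beta> - 1/2)) / 16"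
    using \<beta>(2) by (simp_all add: powr_less_one)
  from exists_nat_powr_le[OF this] obtain L :: nat
    where "1 \<le> L" and small: "real L powr (\<beta> - 1/2) \<le> (1 - 2 powr (\<beta> - 1/2)) / 16"
    by blast
  define c where "c = real L / (8 * sqrt (real L ^ 2 + 3)) / 2 ^ L"
  have "0 < c"
    using \<open>1 \<le> L\<close> by (simp add: c_def add_nonneg_pos)
  moreover have "c / sqrt (real n) \<le> killed_exp (above_curve \<alpha>) (\<lambda>_. 1) n 0 0" if "1 \<le> n" for n
  proof -
    let ?B = "\<lambda>s y. 0 < y \<and> above_curve \<beta> s y"
    have "real L ^ 2 * 1 \<le> real L ^ 2 * real n"
      using that by (intro mult_left_mono) auto
    then have "sqrt (real L ^ 2 + 3 * real n) \<le> sqrt (real L ^ 2 + 3) * sqrt (real n)"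
      by (simp add: real_sqrt_mult[symmetric] algebra_simps)
    then have "c / sqrt (real n) \<le> real L / (8 * sqrt (real L ^ 2 + 3 * real n)) / 2 ^ L"
      using that \<open>1 \<le> L\<close> unfolding c_def
      by (simp add: field_simps mult_left_mono add_nonneg_pos)
    also have "real L / (8 * sqrt (real L ^ 2 + 3 * real n)) \<le> killed_exp ?B (\<lambda>_. 1) n L (int L)"
      by (rule killed_exp_above_curve_survival_ge[OF \<open>1 \<le> L\<close> \<beta>(1,2) small])
    also have "killed_exp ?B (\<lambda>_. 1) n L (int L) \<le> killed_exp (above_curve \<alpha>) (\<lambda>_. 1) n L (int L)"
    proof (rule killed_exp_mono_region)
      fix s y
      assume "L \<le> s" "0 < y \<and> above_curve \<beta> s y"
      moreover have "real s powr \<alpha> \<le> real s powr \<beta>"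
        using \<open>L \<le> s\<close> \<open>1 \<le> L\<close> \<beta>(3) by (intro powr_mono) auto
      ultimately show "above_curve \<alpha> s y"
        by (auto simp: above_curve_def)
    qed simp
    also have "killed_exp (above_curve \<alpha>) (\<lambda>_. 1) n L (int L) / 2 ^ L
                 \<le> killed_exp (above_curve \<alpha>) (\<lambda>_. 1) (L + n) 0 0"
      using killed_exp_straight_up[of L "above_curve \<alpha>" 0 0 "\<lambda>_. 1" n] above_curve_diagonal assms
      by simp
    also have "\<dots> \<le> killed_exp (above_curve \<alpha>) (\<lambda>_. 1) n 0 0"
      by (rule killed_exp_one_antimono) simp
    finally show ?thesis by (simp add: divide_right_mono)
  qed
  ultimately show ?thesis using that by blast
qed

definition sign_lists :: "nat \<Rightarrow> int list set" where
  "sign_lists n = {es. set es \<subseteq> {-1, 1} \<and> length es = n}"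

lemma finite_sign_lists: "finite (sign_lists n)"
  unfolding sign_lists_def by (rule finite_lists_length_eq) simp

lemma sign_lists_Suc: "sign_lists (Suc n) = (\<lambda>(es, e). e # es) ` (sign_lists n \<times> {-1, 1})"
  unfolding sign_lists_def by (rule lists_length_Suc_eq)

(* The walk from (t, x) whose k-th step is s e_1 \<cdots> e_k; carrying the running product s keeps
   the recursion structural. *)
fun sign_walk_in :: "(nat \<Rightarrow> int \<Rightarrow> bool) \<Rightarrow> nat \<Rightarrow> int \<Rightarrow> int \<Rightarrow> int list \<Rightarrow> bool" where
  "sign_walk_in A t x s [] \<longleftrightarrow> A t x"
| "sign_walk_in A t x s (e # es) \<longleftrightarrow> A t x \<and> sign_walk_in A (Suc t) (x + s * e) (s * e) es"

lemma sum_sign_walk_in: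
  "s \<in> {-1, 1} \<Longrightarrow>
     (\<Sum>es\<in>sign_lists m. if sign_walk_in A t x s es then 1 else 0) = 2 ^ m * killed_exp A (\<lambda>_. 1) m t x"
proof (induction m arbitrary: t x s)
  case 0
  have "sign_lists 0 = {[]}" by (auto simp: sign_lists_def)
  then show ?case by simp
next
  case (Suc m)
  have "inj_on (\<lambda>(es, e). e # es) (sign_lists m \<times> {-1, 1})"
    by (auto simp: inj_on_def)
  then have "(\<Sum>es\<in>sign_lists (Suc m). if sign_walk_in A t x s es then 1 else (0::real))
      = (\<Sum>(es, e)\<in>sign_lists m \<times> {-1, 1}. if sign_walk_in A t x s (e # es) then 1 else 0)"
    unfolding sign_lists_Suc by (subst sum.reindex) (simp_all add: case_prod_beta)
  also have "\<dots> = (\<Sum>e\<in>{-1, 1}. \<Sum>es\<in>sign_lists m. if sign_walk_in A t x s (e # es) then 1 else 0)"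
    by (subst sum.cartesian_product[symmetric]) (rule sum.swap)
  also have "\<dots> = (\<Sum>e\<in>{-1, 1::int}. if A t x then 2 ^ m * killed_exp A (\<lambda>_. 1) m (Suc t) (x + s * e) else 0)"
    using Suc.prems by (intro sum.cong refl) (auto simp: Suc.IH)
  also have "\<dots> = 2 ^ Suc m * killed_exp A (\<lambda>_. 1) (Suc m) t x"
    using Suc.prems by (auto simp: algebra_simps)
  finally show ?case .
qed

definition sign_path :: "int list \<Rightarrow> nat \<Rightarrow> int" where
  "sign_path es i = (\<Sum>k=1..i. prod_list (take k es))"

lemma sign_path_0 [simp]: "sign_path es 0 = 0"
  by (simp add: sign_path_def)

lemma sign_path_Cons: "sign_path (e # es) (Suc i) = e + e * sign_path es i"
proof -
  have "sign_path (e # es) (Suc i) = e + (\<Sum>k=Suc 1..Suc i. prod_list (take k (e # es)))"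
    unfolding sign_path_def by (subst sum.atLeast_Suc_atMost) auto
  also have "(\<Sum>k=Suc 1..Suc i. prod_list (take k (e # es))) = (\<Sum>k=1..i. e * prod_list (take k es))"
    unfolding sum.shift_bounds_cl_Suc_ivl by simp
  finally show ?thesis by (simp add: sign_path_def sum_distrib_left)
qed

lemma sign_walk_in_iff:
  "sign_walk_in A t x s es \<longleftrightarrow> (\<forall>i\<le>length es. A (t + i) (x + s * sign_path es i))"
proof (induction es arbitrary: t x s)
  case (Cons e es)
  have all_le_Suc: "(\<forall>i\<le>Suc n. P i) \<longleftrightarrow> P 0 \<and> (\<forall>i\<le>n. P (Suc i))" for n and P :: "nat \<Rightarrow> bool"
    unfolding less_Suc_eq_le[symmetric] All_less_Suc2 ..
  show ?case
    unfolding sign_walk_in.simps Cons.IH length_Cons all_le_Suc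
    by (simp add: sign_path_Cons algebra_simps)
qed simp

lemma Zsum_eq_sign_path:
  assumes X: "\<And>j. j \<in> {1..length es} \<Longrightarrow> X j \<omega> = of_int (es ! (j - 1))" and "i \<le> length es"
  shows "Zsum X i \<omega> = of_int (sign_path es i)"
proof -
  have "(\<Prod>j=1..k. X j \<omega>) = of_int (prod_list (take k es))" if "k \<le> length es" for k
    using that
  proof (induction k)
    case (Suc k)
    then show ?case
      using X[of "Suc k"] by (simp add: prod.nat_ivl_Suc' take_Suc_conv_app_nth)
  qed simp
  then show ?thesis
    using \<open>i \<le> length es\<close> by (simp add: Zsum_def sign_path_def)
qed

locale fair_signs = prob_space +
  fixes X :: "nat \<Rightarrow> 'a \<Rightarrow> real"
  assumes indep: "indep_vars (\<lambda>_. borel) X {1..}"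
    and prob_plus: "\<And>i. i \<ge> 1 \<Longrightarrow> prob {\<omega> \<in> space M. X i \<omega> = 1} = 1/2"
    and prob_minus: "\<And>i. i \<ge> 1 \<Longrightarrow> prob {\<omega> \<in> space M. X i \<omega> = -1} = 1/2"
begin

definition cylinder :: "int list \<Rightarrow> 'a set" where
  "cylinder es = {\<omega> \<in> space M. \<forall>j\<in>{1..length es}. X j \<omega> = of_int (es ! (j - 1))}"

lemma measurable_X: "1 \<le> i \<Longrightarrow> X i \<in> borel_measurable M"
  using indep unfolding indep_vars_def by auto

lemma sets_cylinder: "cylinder es \<in> events"
  unfolding cylinder_def using measurable_X by (intro sets.sets_Collect_finite_All) auto

lemma prob_cylinder:
  assumes "es \<in> sign_lists n"
  shows "prob (cylinder es) = 1 / 2 ^ n"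
proof (cases "n = 0")
  case True
  then show ?thesis using assms by (simp add: sign_lists_def cylinder_def prob_space)
next
  case False
  have es: "length es = n" "\<And>j. j < n \<Longrightarrow> es ! j \<in> {-1, 1}"
    using assms nth_mem by (fastforce simp: sign_lists_def)+
  have "cylinder es = (\<Inter>j\<in>{1..n}. X j -` {of_int (es ! (j - 1))} \<inter> space M)"
    using False es by (auto simp: cylinder_def)
  moreover have "prob (\<Inter>j\<in>{1..n}. X j -` {of_int (es ! (j - 1))} \<inter> space M)
      = (\<Prod>j\<in>{1..n}. prob (X j -` {of_int (es ! (j - 1))} \<inter> space M))"
    by (rule indep_varsD[OF indep]) (use False in auto)
  ultimately have "prob (cylinder es) = (\<Prod>j\<in>{1..n}. prob (X j -` {of_int (es ! (j - 1))} \<inter> space M))"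
    by simp
  also have "\<dots> = (\<Prod>j\<in>{1..n}. 1 / 2)"
  proof (intro prod.cong refl)
    fix j assume j: "j \<in> {1..n}"
    have "X j -` {of_int (es ! (j - 1))} \<inter> space M = {\<omega> \<in> space M. X j \<omega> = of_int (es ! (j - 1))}"
      by auto
    moreover have "j - 1 < n" using j by auto
    then have "es ! (j - 1) \<in> {-1, 1}" by (rule es(2))
    ultimately show "prob (X j -` {of_int (es ! (j - 1))} \<inter> space M) = 1 / 2"
      using j prob_plus[of j] prob_minus[of j] by (cases "es ! (j - 1) = 1") auto
  qed
  finally show ?thesis by (simp add: power_one_over)
qed

lemma cylinder_unique:
  assumes "es \<in> sign_lists n" "es' \<in> sign_lists n" "\<omega> \<in> cylinder es" "\<omega> \<in> cylinder es'"
  shows "es = es'"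
proof (rule nth_equalityI)
  show "length es = length es'" using assms(1,2) by (simp add: sign_lists_def)
  fix j assume j: "j < length es"
  have "X (Suc j) \<omega> = of_int (es ! j)"
    using bspec[OF assms(3)[unfolded cylinder_def, THEN CollectD, THEN conjunct2], of "Suc j"] j by simp
  moreover have "X (Suc j) \<omega> = of_int (es' ! j)"
    using bspec[OF assms(4)[unfolded cylinder_def, THEN CollectD, THEN conjunct2], of "Suc j"] j
      \<open>length es = length es'\<close> by simp
  ultimately show "es ! j = es' ! j" by simp
qed

lemma AE_in_cylinder: "AE \<omega> in M. \<exists>es\<in>sign_lists n. \<omega> \<in> cylinder es"
proof -
  have "AE \<omega> in M. X i \<omega> \<in> {-1, 1}" if "i \<in> {1..n}" for i
  proof -
    have "{\<omega> \<in> space M. X i \<omega> \<in> {-1, 1}} = {\<omega> \<in> space M. X i \<omega> = 1} \<union> {\<omega> \<in> space M. X i \<omega> = -1}"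
      by auto
    also have "prob \<dots> = 1"
      using that measurable_X[of i] prob_plus[of i] prob_minus[of i]
      by (subst finite_measure_Union) auto
    finally have "AE \<omega> in M. \<omega> \<in> {\<omega> \<in> space M. X i \<omega> \<in> {-1, 1}}"
      by (rule AE_prob_1)
    then show ?thesis by eventually_elim simp
  qed
  then have "AE \<omega> in M. \<forall>i\<in>{1..n}. X i \<omega> \<in> {-1, 1}"
    by (simp add: AE_finite_all)
  then show ?thesis
  proof (rule AE_mp, intro AE_I2 impI)
    fix \<omega> assume \<omega>: "\<omega> \<in> space M" "\<forall>i\<in>{1..n}. X i \<omega> \<in> {-1, 1}"
    let ?es = "map (\<lambda>j. if X j \<omega> = 1 then 1 else -1 :: int) [1..<Suc n]"
    have "?es \<in> sign_lists n" by (auto simp: sign_lists_def)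
    moreover have "\<omega> \<in> cylinder ?es"
      unfolding cylinder_def
    proof (intro CollectI conjI ballI)
      fix j assume "j \<in> {1..length ?es}"
      then have j: "j \<in> {1..n}" and es_j: "?es ! (j - 1) = (if X j \<omega> = 1 then 1 else -1)"
        by (auto simp: nth_map_upt simp del: upt_Suc)
      show "X j \<omega> = of_int (?es ! (j - 1))"
        unfolding es_j using \<omega>(2) j by auto
    qed (use \<omega>(1) in simp)
    ultimately show "\<exists>es\<in>sign_lists n. \<omega> \<in> cylinder es" ..
  qed
qed

lemma prob_determined_by_signs:
  assumes "E \<in> events"
    and E: "\<And>\<omega> es. es \<in> sign_lists n \<Longrightarrow> \<omega> \<in> cylinder es \<Longrightarrow> \<omega> \<in> E \<longleftrightarrow> P es"
  shows "prob E = (\<Sum>es\<in>sign_lists n. if P es then 1 else 0) / 2 ^ n"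
proof -
  let ?G = "{es \<in> sign_lists n. P es}"
  have "prob E = prob (\<Union>es\<in>?G. cylinder es)"
  proof (rule finite_measure_eq_AE)
    show "AE \<omega> in M. \<omega> \<in> E \<longleftrightarrow> \<omega> \<in> (\<Union>es\<in>?G. cylinder es)"
      using AE_in_cylinder[of n]
    proof (rule AE_mp, intro AE_I2 impI)
      fix \<omega> assume "\<exists>es\<in>sign_lists n. \<omega> \<in> cylinder es"
      then obtain es where es: "es \<in> sign_lists n" "\<omega> \<in> cylinder es" by blast
      have "\<omega> \<in> (\<Union>es\<in>?G. cylinder es) \<longleftrightarrow> P es"
      proof
        assume "\<omega> \<in> (\<Union>es\<in>?G. cylinder es)"
        then obtain es' where es': "es' \<in> ?G" "\<omega> \<in> cylinder es'" by blast
        then have "es = es'" using cylinder_unique[OF es(1) _ es(2)] by simp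
        then show "P es" using es' by simp
      qed (use es in blast)
      then show "\<omega> \<in> E \<longleftrightarrow> \<omega> \<in> (\<Union>es\<in>?G. cylinder es)" using E[OF es] by simp
    qed
  qed (use assms(1) sets_cylinder in auto)
  also have "\<dots> = (\<Sum>es\<in>?G. prob (cylinder es))"
  proof (intro finite_measure_finite_Union)
    show "disjoint_family_on cylinder ?G"
      unfolding disjoint_family_on_def
    proof (intro ballI impI)
      fix es es' assume "es \<in> ?G" "es' \<in> ?G" "es \<noteq> es'"
      then show "cylinder es \<inter> cylinder es' = {}"
        using cylinder_unique[of es n es'] by blast
    qed
  qed (use finite_sign_lists sets_cylinder in auto)
  also have "\<dots> = (\<Sum>es\<in>?G. 1 / 2 ^ n)"
    using prob_cylinder by (intro sum.cong) auto
  also have "\<dots> = (\<Sum>es\<in>sign_lists n. if P es then 1 else 0) / 2 ^ n"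
    using finite_sign_lists by (simp add: sum.inter_filter[symmetric])
  finally show ?thesis .
qed

lemma prob_Zsum_above_curve:
  "prob {\<omega> \<in> space M. \<forall>i\<in>{1..n}. Zsum X i \<omega> \<ge> real i powr \<alpha>}
     = killed_exp (above_curve \<alpha>) (\<lambda>_. 1) n 0 0"
proof -
  have "prob {\<omega> \<in> space M. \<forall>i\<in>{1..n}. Zsum X i \<omega> \<ge> real i powr \<alpha>}
      = (\<Sum>es\<in>sign_lists n. if sign_walk_in (above_curve \<alpha>) 0 0 1 es then 1 else 0) / 2 ^ n"
  proof (rule prob_determined_by_signs)
    have "Zsum X i \<in> borel_measurable M" for i
      unfolding Zsum_def by (intro borel_measurable_sum borel_measurable_prod measurable_X) auto
    then show "{\<omega> \<in> space M. \<forall>i\<in>{1..n}. Zsum X i \<omega> \<ge> real i powr \<alpha>} \<in> events"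
      by (intro sets.sets_Collect_finite_All) (auto simp: borel_measurable_iff_ge)
  next
    fix \<omega> es
    assume es: "es \<in> sign_lists n" and "\<omega> \<in> cylinder es"
    then have len: "length es = n" by (simp add: sign_lists_def)
    have "Zsum X i \<omega> = of_int (sign_path es i)" if "i \<le> n" for i
      using \<open>\<omega> \<in> cylinder es\<close> that len by (intro Zsum_eq_sign_path) (auto simp: cylinder_def)
    then have "\<omega> \<in> {\<omega> \<in> space M. \<forall>i\<in>{1..n}. Zsum X i \<omega> \<ge> real i powr \<alpha>}
        \<longleftrightarrow> (\<forall>i\<in>{1..n}. above_curve \<alpha> i (sign_path es i))"
      using \<open>\<omega> \<in> cylinder es\<close> by (auto simp: cylinder_def above_curve_def)
    also have "\<dots> \<longleftrightarrow> (\<forall>i\<le>n. above_curve \<alpha> i (sign_path es i))"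
    proof -
      \<comment> \<open>Time 0 imposes no constraint: the walk starts at 0 and 0 powr \<alpha> = 0.\<close>
      have base: "above_curve \<alpha> 0 (sign_path es 0)" by (simp add: above_curve_def)
      show ?thesis
      proof (intro iffI allI impI)
        fix i
        assume "\<forall>i\<in>{1..n}. above_curve \<alpha> i (sign_path es i)" "i \<le> n"
        then show "above_curve \<alpha> i (sign_path es i)" using base by (cases "i = 0") auto
      qed auto
    qed
    also have "\<dots> \<longleftrightarrow> sign_walk_in (above_curve \<alpha>) 0 0 1 es"
      by (simp add: sign_walk_in_iff len)
    finally show "\<omega> \<in> {\<omega> \<in> space M. \<forall>i\<in>{1..n}. Zsum X i \<omega> \<ge> real i powr \<alpha>}
        \<longleftrightarrow> sign_walk_in (above_curve \<alpha>) 0 0 1 es" .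
  qed
  also have "\<dots> = killed_exp (above_curve \<alpha>) (\<lambda>_. 1) n 0 0"
    by (simp add: sum_sign_walk_in)
  finally show ?thesis .
qed

end

theorem lemma13:
  fixes M :: "'a measure" and X :: "nat \<Rightarrow> 'a \<Rightarrow> real" and \<alpha> :: real
  assumes "prob_space M"
    and "prob_space.indep_vars M (\<lambda>_. borel) X {1..}"
    and "\<And>i. i \<ge> 1 \<Longrightarrow> measure M {\<omega> \<in> space M. X i \<omega> = 1} = 1/2"
    and "\<And>i. i \<ge> 1 \<Longrightarrow> measure M {\<omega> \<in> space M. X i \<omega> = -1} = 1/2"
    and "\<alpha> < 1/2"
  shows "\<exists>c C. 0 < c \<and> c \<le> C \<and>
    (\<forall>n::nat. n \<ge> 1 \<longrightarrow>
      c * real n powr (-1/2)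
        \<le> measure M {\<omega> \<in> space M. \<forall>i\<in>{1..n}. Zsum X i \<omega> \<ge> real i powr \<alpha>}
      \<and> measure M {\<omega> \<in> space M. \<forall>i\<in>{1..n}. Zsum X i \<omega> \<ge> real i powr \<alpha>}
        \<le> C * real n powr (-1/2))"
proof -
  interpret fair_signs M X
    using assms(1-4) by (simp add: fair_signs_def fair_signs_axioms_def)
  obtain c where "0 < c"
    and lower: "\<And>n. 1 \<le> n \<Longrightarrow> c / sqrt (real n) \<le> killed_exp (above_curve \<alpha>) (\<lambda>_. 1) n 0 0"
    using killed_exp_above_curve_lower[OF assms(5)] by blast
  have bounds:
    "c * real n powr (-1/2) \<le> prob {\<omega> \<in> space M. \<forall>i\<in>{1..n}. Zsum X i \<omega> \<ge> real i powr \<alpha>}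
     \<and> prob {\<omega> \<in> space M. \<forall>i\<in>{1..n}. Zsum X i \<omega> \<ge> real i powr \<alpha>} \<le> 1 * real n powr (-1/2)"
    if "1 \<le> n" for n :: nat
  proof -
    have "real n powr (-1/2) = 1 / sqrt (real n)"
      using that by (simp add: powr_minus_divide powr_half_sqrt)
    then show ?thesis
      using lower[OF that] killed_exp_above_curve_upper[OF that] unfolding prob_Zsum_above_curve
      by simp
  qed
  have "c \<le> 1"
    using order_trans[OF conjunct1[OF bounds] conjunct2[OF bounds], of 1] by simp
  with \<open>0 < c\<close> bounds show ?thesis by blast
qed

end
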